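(* Let $G$ be a bipartite graph with bipartition $\{X,Y\}$ such that $|V(G)|$ is divisible by $3$. Let $H$ be the graph with $V(H)=V(G)\cup\{x,y,x',y'\}$ (four new vertices) and $E(H)=E(G)\cup\{xv: v\in X\}\cup\{yv: v\in Y\}\cup\{xy,xx',x'y',yy'\}$, and let $k=|E(H)|-4|V(G)|/3-4$. If $H'$ is a cactus with $V(H')=V(H)$ obtained from $H$ by deleting at most $k$ edges, then the number of cycles of $H'$ equals $|V(G)|/3+1=(|V(H')|-1)/3$.
   Context: All graphs are finite, simple and undirected. A cactus is a connected graph in which every edge lies in at most one cycle. *)

theory Defs
  imports Main
begin

definition simple_graph :: "'a set \<Rightarrow> 'a set set \<Rightarrow> bool" where
  "simple_graph V E \<longleftrightarrow> finite V \<and> (\<forall>e\<in>E. \<exists>u v. e = {u, v} \<and> u \<noteq> v \<and> u \<in> V \<and> v \<in> V)"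

definition bipartition :: "'a set \<Rightarrow> 'a set set \<Rightarrow> 'a set \<Rightarrow> 'a set \<Rightarrow> bool" where
  "bipartition V E X Y \<longleftrightarrow> X \<union> Y = V \<and> X \<inter> Y = {} \<and>
     (\<forall>e\<in>E. \<exists>u v. e = {u, v} \<and> u \<in> X \<and> v \<in> Y)"

definition cycle_edges :: "'a list \<Rightarrow> 'a set set" where
  "cycle_edges vs = set (map (\<lambda>i. {vs ! i, vs ! ((i + 1) mod length vs)}) [0..<length vs])"

definition is_cycle :: "'a set \<Rightarrow> 'a set set \<Rightarrow> 'a set set \<Rightarrow> bool" where
  "is_cycle V E C \<longleftrightarrow> (\<exists>vs. length vs \<ge> 3 \<and> distinct vs \<and> set vs \<subseteq> V \<and>
      cycle_edges vs \<subseteq> E \<and> C = cycle_edges vs)"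

definition num_cycles :: "'a set \<Rightarrow> 'a set set \<Rightarrow> nat" where
  "num_cycles V E = card {C. is_cycle V E C}"

definition connected_graph :: "'a set \<Rightarrow> 'a set set \<Rightarrow> bool" where
  "connected_graph V E \<longleftrightarrow> V \<noteq> {} \<and>
     (\<forall>u\<in>V. \<forall>v\<in>V. (\<lambda>a b. {a, b} \<in> E)\<^sup>*\<^sup>* u v)"

definition cactus :: "'a set \<Rightarrow> 'a set set \<Rightarrow> bool" where
  "cactus V E \<longleftrightarrow> simple_graph V E \<and> connected_graph V E \<and>
     (\<forall>e\<in>E. card {C. is_cycle V E C \<and> e \<in> C} \<le> 1)"

end

theory Submission
  imports Defs
begin

text \<open>
  Every cycle of the bipartite graph H has at least four edges, and in a cactus the cycles are
  edge-disjoint, so 4c \<le> |E(H')|. On the other hand, any nonempty graph satisfies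
  |E| \<le> |V| - 1 + c: if all degrees are at least two, a longest path closes up to a cycle, and
  deleting one of its edges destroys at least one cycle; otherwise delete a vertex of degree at
  most one. With |V(H')| = |V(G)| + 4 and
  |E(H')| \<ge> 4|V(G)|/3 + 4 the two inequalities squeeze c to |V(G)|/3 + 1.
\<close>

lemma simple_graph_edgeD:
  "simple_graph V E \<Longrightarrow> {a, b} \<in> E \<Longrightarrow> a \<in> V \<and> b \<in> V \<and> a \<noteq> b"
  unfolding simple_graph_def by (metis doubleton_eq_iff)

lemma simple_graph_finite_edges: "simple_graph V E \<Longrightarrow> finite E"
  unfolding simple_graph_def by (metis (no_types, lifting) PowI empty_subsetI finite_Pow_iff
      insert_subset rev_finite_subset subsetI)

lemma simple_graph_mono_edges: "simple_graph V E \<Longrightarrow> E' \<subseteq> E \<Longrightarrow> simple_graph V E'"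
  unfolding simple_graph_def by blast

lemma mem_cycle_edges_iff:
  "e \<in> cycle_edges vs \<longleftrightarrow> (\<exists>i < length vs. e = {vs ! i, vs ! ((i + 1) mod length vs)})"
  unfolding cycle_edges_def by auto

lemma Suc_mod_eq: "i < n \<Longrightarrow> Suc i mod n = (if Suc i = n then 0 else Suc i)"
  by auto

lemma is_cycle_subset: "is_cycle V E C \<Longrightarrow> C \<subseteq> E"
  unfolding is_cycle_def by blast

lemma is_cycle_mono: "is_cycle V E C \<Longrightarrow> V \<subseteq> V' \<Longrightarrow> E \<subseteq> E' \<Longrightarrow> is_cycle V' E' C"
  unfolding is_cycle_def by blast

lemma finite_cycles: "simple_graph V E \<Longrightarrow> finite {C. is_cycle V E C}"
  by (rule finite_subset[of _ "Pow E"]) (auto dest: is_cycle_subset simp: simple_graph_finite_edges)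

lemma num_cycles_mono:
  "simple_graph V' E' \<Longrightarrow> V \<subseteq> V' \<Longrightarrow> E \<subseteq> E' \<Longrightarrow> num_cycles V E \<le> num_cycles V' E'"
  unfolding num_cycles_def by (rule card_mono) (auto intro: finite_cycles is_cycle_mono)

lemma card_cycle_edges:
  assumes "distinct vs" and "3 \<le> length vs"
  shows "card (cycle_edges vs) = length vs"
proof -
  define L where "L = length vs"
  have "inj_on (\<lambda>i. {vs ! i, vs ! (Suc i mod L)}) {0..<L}"
  proof (rule inj_onI)
    fix i j assume "i \<in> {0..<L}" "j \<in> {0..<L}"
      and "{vs ! i, vs ! (Suc i mod L)} = {vs ! j, vs ! (Suc j mod L)}"
    moreover have "Suc k mod L < L" for k
      using assms(2) unfolding L_def by (intro mod_less_divisor) auto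
    ultimately have "i = j \<or> (i = Suc j mod L \<and> Suc i mod L = j)"
      using nth_eq_iff_index_eq[OF assms(1)] unfolding L_def doubleton_eq_iff by auto
    then show "i = j" using assms(2) \<open>i \<in> {0..<L}\<close> \<open>j \<in> {0..<L}\<close>
      unfolding L_def by (auto simp: Suc_mod_eq split: if_splits)
  qed
  then show ?thesis
    unfolding cycle_edges_def L_def by (simp add: card_image del: upt_Suc)
qed

lemma bipartition_mono_edges:
  "bipartition V E X Y \<Longrightarrow> E' \<subseteq> E \<Longrightarrow> bipartition V E' X Y"
  unfolding bipartition_def by blast

lemma bipartition_edgeD:
  assumes "bipartition V E X Y" and "{a, b} \<in> E"
  shows "a \<in> X \<and> b \<in> Y \<or> a \<in> Y \<and> b \<in> X"
  using assms unfolding bipartition_def by (metis doubleton_eq_iff)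

lemma bipartition_card_cycle_ge_4:
  assumes bip: "bipartition V E X Y" and C: "is_cycle V E C"
  shows "4 \<le> card C"
proof -
  obtain vs where vs: "3 \<le> length vs" "distinct vs" "cycle_edges vs \<subseteq> E" "C = cycle_edges vs"
    using C unfolding is_cycle_def by blast
  have "length vs \<noteq> 3"
  proof
    assume L: "length vs = 3"
    have edge: "{vs ! i, vs ! (Suc i mod 3)} \<in> E" if "i < 3" for i
    proof -
      have "{vs ! i, vs ! (Suc i mod 3)} \<in> cycle_edges vs"
        unfolding mem_cycle_edges_iff using that L by (metis Suc_eq_plus1)
      then show ?thesis using vs(3) by blast
    qed
    have disj: "X \<inter> Y = {}" using bip unfolding bipartition_def by blast
    have "vs ! 0 \<in> X \<and> vs ! 1 \<in> Y \<or> vs ! 0 \<in> Y \<and> vs ! 1 \<in> X"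
      "vs ! 1 \<in> X \<and> vs ! 2 \<in> Y \<or> vs ! 1 \<in> Y \<and> vs ! 2 \<in> X"
      "vs ! 2 \<in> X \<and> vs ! 0 \<in> Y \<or> vs ! 2 \<in> Y \<and> vs ! 0 \<in> X"
      using edge[of 0] edge[of 1] edge[of 2] bipartition_edgeD[OF bip] by (simp_all add: numeral_2_eq_2)
    then show False using disj by blast
  qed
  then show ?thesis using card_cycle_edges[OF vs(2,1)] vs(1,4) by simp
qed

definition is_path :: "'a set set \<Rightarrow> 'a list \<Rightarrow> bool" where
  "is_path E p \<longleftrightarrow> distinct p \<and> (\<forall>i. Suc i < length p \<longrightarrow> {p ! i, p ! Suc i} \<in> E)"

lemma is_path_Cons:
  "is_path E p \<Longrightarrow> p \<noteq> [] \<Longrightarrow> w \<notin> set p \<Longrightarrow> {w, p ! 0} \<in> E \<Longrightarrow> is_path E (w # p)"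
  unfolding is_path_def by (auto simp: nth_Cons split: nat.split)

lemma is_cycle_close_path:
  assumes p: "is_path E p" "set p \<subseteq> V" and j: "2 \<le> j" "j < length p"
    and closing: "{p ! j, p ! 0} \<in> E"
  shows "is_cycle V E (cycle_edges (take (Suc j) p))"
proof -
  define vs where "vs = take (Suc j) p"
  have len: "length vs = Suc j" using j unfolding vs_def by simp
  have "cycle_edges vs \<subseteq> E"
  proof
    fix e assume "e \<in> cycle_edges vs"
    then obtain i where "i < Suc j" and e: "e = {vs ! i, vs ! (Suc i mod Suc j)}"
      unfolding mem_cycle_edges_iff len by auto
    then show "e \<in> E"
      using p(1) closing j unfolding is_path_def vs_def by (cases "i = j") auto
  qed
  moreover have "distinct vs" "set vs \<subseteq> V"
    using p unfolding is_path_def vs_def by (auto dest: in_set_takeD)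
  ultimately show ?thesis
    using len j unfolding is_cycle_def vs_def[symmetric] by (intro exI[of _ vs]) auto
qed

lemma exists_path_saturated_at_head:
  assumes G: "simple_graph V E" and v: "v \<in> V"
  shows "\<exists>p. is_path E p \<and> p \<noteq> [] \<and> set p \<subseteq> V \<and> (\<forall>w. {p ! 0, w} \<in> E \<longrightarrow> w \<in> set p)"
proof -
  define P where "P = {p. is_path E p \<and> p \<noteq> [] \<and> set p \<subseteq> V}"
  have "length q < Suc (card V)" if "q \<in> P" for q
  proof -
    have "distinct q" "set q \<subseteq> V" using that unfolding P_def is_path_def by auto
    then show ?thesis using G card_mono unfolding simple_graph_def by (metis distinct_card le_imp_less_Suc)
  qed
  moreover have "[v] \<in> P" using v unfolding P_def is_path_def by simp
  ultimately obtain p where "p \<in> P" and longest: "\<And>q. q \<in> P \<Longrightarrow> length q \<le> length p"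
    using ex_has_greatest_nat[of "\<lambda>p. p \<in> P" "[v]" length] by blast
  have "w \<in> set p" if "{p ! 0, w} \<in> E" for w
  proof (rule ccontr)
    assume "w \<notin> set p"
    with \<open>p \<in> P\<close> that have "w # p \<in> P"
      using simple_graph_edgeD[OF G that] unfolding P_def by (auto intro: is_path_Cons simp: insert_commute)
    then show False using longest by fastforce
  qed
  with \<open>p \<in> P\<close> show ?thesis unfolding P_def by blast
qed

lemma exists_cycle_if_min_degree_2:
  assumes G: "simple_graph V E" and "V \<noteq> {}"
    and deg: "\<forall>v\<in>V. \<exists>w1 w2. w1 \<noteq> w2 \<and> {v, w1} \<in> E \<and> {v, w2} \<in> E"
  shows "\<exists>C. is_cycle V E C"
proof -
  obtain v where "v \<in> V" using \<open>V \<noteq> {}\<close> by blast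
  then obtain p where p: "is_path E p" "p \<noteq> []" "set p \<subseteq> V"
    and saturated: "\<And>w. {p ! 0, w} \<in> E \<Longrightarrow> w \<in> set p"
    using exists_path_saturated_at_head[OF G] by blast
  have "p ! 0 \<in> V" using p by auto
  then obtain w1 w2 where w: "w1 \<noteq> w2" "{p ! 0, w1} \<in> E" "{p ! 0, w2} \<in> E"
    using deg by blast
  txt \<open>One of the two neighbours of the head differs from its successor on the path.\<close>
  then obtain w where wE: "{p ! 0, w} \<in> E" and w0: "w \<noteq> p ! 0"
    and w1: "length p \<ge> 2 \<longrightarrow> w \<noteq> p ! 1"
    using simple_graph_edgeD[OF G] by metis
  obtain j where "j < length p" "p ! j = w"
    using saturated[OF wE] by (auto simp: in_set_conv_nth)
  have "j \<noteq> 0" using w0 \<open>p ! j = w\<close> by (metis)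
  moreover have "j \<noteq> 1"
  proof
    assume "j = 1"
    with \<open>j < length p\<close> \<open>p ! j = w\<close> w1 show False by simp
  qed
  ultimately have "2 \<le> j" by linarith
  then show ?thesis
    using is_cycle_close_path[OF p(1,3) _ \<open>j < length p\<close>] wE \<open>p ! j = w\<close>
    by (auto simp: insert_commute)
qed

lemma num_cycles_remove_cycle_edge:
  assumes G: "simple_graph V E" and C: "is_cycle V E C" and "e \<in> C"
  shows "num_cycles V (E - {e}) < num_cycles V E"
  unfolding num_cycles_def
proof (rule psubset_card_mono[OF finite_cycles[OF G]])
  show "{C. is_cycle V (E - {e}) C} \<subset> {C. is_cycle V E C}"
    using C \<open>e \<in> C\<close> by (auto dest: is_cycle_subset intro: is_cycle_mono)
qed

lemma simple_graph_remove_vertex: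
  "simple_graph V E \<Longrightarrow> simple_graph (V - {v}) {e \<in> E. v \<notin> e}"
  unfolding simple_graph_def by fastforce

lemma card_edges_le_remove_leaf:
  assumes G: "simple_graph V E"
    and leaf: "\<And>w1 w2. {v, w1} \<in> E \<Longrightarrow> {v, w2} \<in> E \<Longrightarrow> w1 = w2"
  shows "card E \<le> card {e \<in> E. v \<notin> e} + 1"
proof -
  have fin: "finite E" using simple_graph_finite_edges[OF G] .
  have "card {e \<in> E. v \<in> e} \<le> 1"
  proof (rule card_le_Suc0_iff_eq[THEN iffD2, unfolded One_nat_def[symmetric]])
    show "finite {e \<in> E. v \<in> e}" using fin by simp
    show "\<forall>e1 \<in> {e \<in> E. v \<in> e}. \<forall>e2 \<in> {e \<in> E. v \<in> e}. e1 = e2"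
      using G leaf unfolding simple_graph_def by (smt (verit) insert_commute insert_iff mem_Collect_eq singletonD)
  qed
  moreover have "E = {e \<in> E. v \<notin> e} \<union> {e \<in> E. v \<in> e}" by blast
  then have "card E \<le> card {e \<in> E. v \<notin> e} + card {e \<in> E. v \<in> e}" by (metis card_Un_le)
  ultimately show ?thesis by linarith
qed

lemma card_edges_le_card_vertices_plus_num_cycles:
  assumes "simple_graph V E" and "V \<noteq> {}"
  shows "card E + 1 \<le> card V + num_cycles V E"
  using assms
proof (induction "card V + card E" arbitrary: V E rule: less_induct)
  case less
  have finV: "finite V" and finE: "finite E"
    using less.prems simple_graph_finite_edges unfolding simple_graph_def by auto
  show ?case
  proof (cases "\<forall>v\<in>V. \<exists>w1 w2. w1 \<noteq> w2 \<and> {v, w1} \<in> E \<and> {v, w2} \<in> E")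
    case True
    then obtain C where C: "is_cycle V E C"
      using exists_cycle_if_min_degree_2 less.prems by blast
    then obtain e where "e \<in> C"
      unfolding is_cycle_def by (metis card_cycle_edges card.empty ex_in_conv not_numeral_le_zero)
    then have "e \<in> E" using is_cycle_subset[OF C] by blast
    then have "card (E - {e}) + 1 = card E" using finE by (metis Suc_eq_plus1 card_Suc_Diff1)
    moreover have "card (E - {e}) + 1 \<le> card V + num_cycles V (E - {e})"
    proof (rule less.hyps)
      show "card V + card (E - {e}) < card V + card E" using \<open>card (E - {e}) + 1 = card E\<close> by linarith
      show "simple_graph V (E - {e})" using simple_graph_mono_edges[OF less.prems(1)] by blast
    qed (rule less.prems(2))
    moreover have "num_cycles V (E - {e}) < num_cycles V E"
      using num_cycles_remove_cycle_edge[OF less.prems(1) C \<open>e \<in> C\<close>] .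
    ultimately show ?thesis by linarith
  next
    case False
    then obtain v where "v \<in> V" and leaf: "\<And>w1 w2. {v, w1} \<in> E \<Longrightarrow> {v, w2} \<in> E \<Longrightarrow> w1 = w2"
      by blast
    show ?thesis
    proof (cases "V = {v}")
      case True
      then have "E = {}" using less.prems(1) unfolding simple_graph_def by blast
      then show ?thesis using True by simp
    next
      case False
      define E' where "E' = {e \<in> E. v \<notin> e}"
      have G': "simple_graph (V - {v}) E'"
        using simple_graph_remove_vertex[OF less.prems(1)] unfolding E'_def .
      have cardV: "card (V - {v}) + 1 = card V" using \<open>v \<in> V\<close> finV by (metis Suc_eq_plus1 card_Suc_Diff1)
      have "card E' \<le> card E" unfolding E'_def using finE by (intro card_mono) auto
      have "card E' + 1 \<le> card (V - {v}) + num_cycles (V - {v}) E'"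
      proof (rule less.hyps[OF _ G'])
        show "card (V - {v}) + card E' < card V + card E" using cardV \<open>card E' \<le> card E\<close> by linarith
        show "V - {v} \<noteq> {}" using False \<open>v \<in> V\<close> by blast
      qed
      moreover have "num_cycles (V - {v}) E' \<le> num_cycles V E"
        by (rule num_cycles_mono[OF less.prems(1)]) (auto simp: E'_def)
      moreover have "card E \<le> card E' + 1"
        using card_edges_le_remove_leaf[OF less.prems(1) leaf] unfolding E'_def .
      ultimately show ?thesis using cardV by linarith
    qed
  qed
qed

lemma mult_num_cycles_le_card_edges:
  assumes G: "simple_graph V E"
    and long: "\<And>C. is_cycle V E C \<Longrightarrow> k \<le> card C"
    and one_cycle: "\<forall>e\<in>E. card {C. is_cycle V E C \<and> e \<in> C} \<le> 1"
  shows "k * num_cycles V E \<le> card E"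
proof -
  define S where "S = {C. is_cycle V E C}"
  have finE: "finite E" using simple_graph_finite_edges[OF G] .
  have "C1 = C2" if "C1 \<in> S" "C2 \<in> S" "e \<in> C1" "e \<in> C2" for C1 C2 e
  proof -
    have "e \<in> E" using that is_cycle_subset unfolding S_def by blast
    then have "card {C. is_cycle V E C \<and> e \<in> C} \<le> Suc 0" using one_cycle by simp
    moreover have "finite {C. is_cycle V E C \<and> e \<in> C}"
      using finite_cycles[OF G] by (rule rev_finite_subset) blast
    ultimately show ?thesis using that card_le_Suc0_iff_eq unfolding S_def by blast
  qed
  then have "pairwise disjnt S" unfolding pairwise_def disjnt_def by blast
  moreover have "finite C" if "C \<in> S" for C
    using finite_subset[OF is_cycle_subset finE] that unfolding S_def by blast
  ultimately have "card (\<Union>S) = (\<Sum>C\<in>S. card C)" by (rule card_Union_disjoint)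
  moreover have "k * card S \<le> (\<Sum>C\<in>S. card C)"
    using sum_mono[of S "\<lambda>_. k" card] long unfolding S_def by (simp add: mult.commute)
  moreover have "card (\<Union>S) \<le> card E"
    using finE is_cycle_subset unfolding S_def by (intro card_mono) auto
  ultimately show ?thesis unfolding num_cycles_def S_def by linarith
qed

lemma bipartition_add_apices:
  assumes bip: "bipartition V E X Y" and new: "x \<notin> V" "y \<notin> V" "x' \<notin> V" "y' \<notin> V"
    and "x \<noteq> y" "x \<noteq> x'" "y \<noteq> y'" "x' \<noteq> y'"
  shows "bipartition (V \<union> {x, y, x', y'})
    (E \<union> {{x, v} | v. v \<in> X} \<union> {{y, v} | v. v \<in> Y} \<union> {{x, y}, {x, x'}, {x', y'}, {y, y'}})
    (X \<union> {y, x'}) (Y \<union> {x, y'})"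
  unfolding bipartition_def
proof (intro conjI ballI)
  have XY: "X \<union> Y = V" "X \<inter> Y = {}" using bip unfolding bipartition_def by auto
  then show "X \<union> {y, x'} \<union> (Y \<union> {x, y'}) = V \<union> {x, y, x', y'}" by blast
  show "(X \<union> {y, x'}) \<inter> (Y \<union> {x, y'}) = {}" using XY assms by blast
  fix e assume "e \<in> E \<union> {{x, v} | v. v \<in> X} \<union> {{y, v} | v. v \<in> Y} \<union> {{x, y}, {x, x'}, {x', y'}, {y, y'}}"
  then consider "e \<in> E" | v where "v \<in> X" "e = {v, x}" | v where "v \<in> Y" "e = {y, v}"
    | "e = {y, x}" | "e = {x', x}" | "e = {x', y'}" | "e = {y, y'}"
    by (auto simp: insert_commute)
  then show "\<exists>u v. e = {u, v} \<and> u \<in> X \<union> {y, x'} \<and> v \<in> Y \<union> {x, y'}"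
    using bip unfolding bipartition_def by cases blast+
qed

lemma simple_graph_add_apices:
  assumes G: "simple_graph V E" and bip: "bipartition V E X Y" and new: "distinct [x, y, x', y']"
    "x \<notin> V" "y \<notin> V"
  shows "simple_graph (V \<union> {x, y, x', y'})
    (E \<union> {{x, v} | v. v \<in> X} \<union> {{y, v} | v. v \<in> Y} \<union> {{x, y}, {x, x'}, {x', y'}, {y, y'}})"
  unfolding simple_graph_def
proof (intro conjI ballI)
  show "finite (V \<union> {x, y, x', y'})" using G unfolding simple_graph_def by simp
  have XY: "X \<subseteq> V" "Y \<subseteq> V" using bip unfolding bipartition_def by auto
  fix e assume "e \<in> E \<union> {{x, v} | v. v \<in> X} \<union> {{y, v} | v. v \<in> Y} \<union> {{x, y}, {x, x'}, {x', y'}, {y, y'}}"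
  then consider "e \<in> E" | v where "v \<in> X" "e = {x, v}" | v where "v \<in> Y" "e = {y, v}"
    | "e = {x, y}" | "e = {x, x'}" | "e = {x', y'}" | "e = {y, y'}"
    by blast
  then show "\<exists>u v. e = {u, v} \<and> u \<noteq> v \<and> u \<in> V \<union> {x, y, x', y'} \<and> v \<in> V \<union> {x, y, x', y'}"
  proof cases
    case 1 then show ?thesis using G unfolding simple_graph_def by blast
  next
    case 2 then show ?thesis using XY new(2) by blast
  next
    case 3 then show ?thesis using XY new(3) by blast
  qed (use new(1) in auto)
qed

theorem mainTheorem2:
  fixes VG :: "'a set" and EG :: "'a set set" and X Y :: "'a set"
    and x y x' y' :: 'a and E' :: "'a set set"
  assumes G: "simple_graph VG EG"
    and bip: "bipartition VG EG X Y"
    and div3: "3 dvd card VG"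
    and new: "distinct [x, y, x', y']" "x \<notin> VG" "y \<notin> VG" "x' \<notin> VG" "y' \<notin> VG"
    and E': "E' \<subseteq> EG \<union> {{x, v} | v. v \<in> X} \<union> {{y, v} | v. v \<in> Y} \<union> {{x, y}, {x, x'}, {x', y'}, {y, y'}}"
    and cac: "cactus (VG \<union> {x, y, x', y'}) E'"
    and del: "int (card ((EG \<union> {{x, v} | v. v \<in> X} \<union> {{y, v} | v. v \<in> Y} \<union> {{x, y}, {x, x'}, {x', y'}, {y, y'}}) - E'))
              \<le> int (card (EG \<union> {{x, v} | v. v \<in> X} \<union> {{y, v} | v. v \<in> Y} \<union> {{x, y}, {x, x'}, {x', y'}, {y, y'}}))
                 - 4 * int (card VG) div 3 - 4"
  shows "num_cycles (VG \<union> {x, y, x', y'}) E' = card VG div 3 + 1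
       \<and> int (num_cycles (VG \<union> {x, y, x', y'}) E') = (int (card (VG \<union> {x, y, x', y'})) - 1) div 3"
proof -
  define VH where "VH = VG \<union> {x, y, x', y'}"
  define EH where "EH = EG \<union> {{x, v} | v. v \<in> X} \<union> {{y, v} | v. v \<in> Y} \<union> {{x, y}, {x, x'}, {x', y'}, {y, y'}}"
  obtain q where q: "card VG = 3 * q" using div3 by blast
  have H': "simple_graph VH E'" and cycles_disjoint: "\<forall>e\<in>E'. card {C. is_cycle VH E' C \<and> e \<in> C} \<le> 1"
    using cac unfolding cactus_def VH_def by blast+
  have "card VH = card VG + card {x, y, x', y'}"
    unfolding VH_def using G new(2-5) by (intro card_Un_disjoint) (auto simp: simple_graph_def)
  also have "card {x, y, x', y'} = 4" using new(1) by simp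
  finally have card_VH: "card VH = 3 * q + 4" using q by simp
  have "finite EH" using simple_graph_finite_edges[OF simple_graph_add_apices[OF G bip new(1-3)]]
    unfolding EH_def .
  moreover have "E' \<subseteq> EH" using E' unfolding EH_def .
  ultimately have "card (EH - E') = card EH - card E'" and "card E' \<le> card EH"
    by (simp_all add: card_Diff_subset finite_subset card_mono)
  then have "4 * q + 4 \<le> card E'" using del q unfolding EH_def[symmetric] by simp
  moreover have "card E' + 1 \<le> card VH + num_cycles VH E'"
    using card_edges_le_card_vertices_plus_num_cycles[OF H'] unfolding VH_def by blast
  moreover have "4 * num_cycles VH E' \<le> card E'"
  proof -
    have "x \<noteq> y" "x \<noteq> x'" "y \<noteq> y'" "x' \<noteq> y'" using new(1) by auto
    then have "bipartition VH E' (X \<union> {y, x'}) (Y \<union> {x, y'})"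
      using bipartition_mono_edges[OF bipartition_add_apices[OF bip new(2-5)] E'] unfolding VH_def by blast
    then show ?thesis
      using mult_num_cycles_le_card_edges[OF H' _ cycles_disjoint] bipartition_card_cycle_ge_4 by blast
  qed
  ultimately have "num_cycles VH E' = q + 1" using card_VH by linarith
  then show ?thesis using q card_VH unfolding VH_def by simp
qed

end
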